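(* Let $k\geq2$ and let $L=(l_1,\dots,l_k)$ be generic and reduced positive integers with sum $n$. Fix $i\in[k]$, let $d=\gcd(n,l_i)$ and $q=n/d$. For $v\in\mathbb{Z}_n$ let ${}_vE_i^q$ be the closed edge-path starting at $v$ and making $q$ consecutive steps of type $i$ (through $v,v+l_i,\dots,v+ql_i=v$). Then all the cycles ${}_vE_i^q$, $v\in\mathbb{Z}_n$, are homologous in $Tonn^{n,k}(L)$.
   Context: $L$ is generic if for all $I,J\subseteq[k]$, $\sum_{i\in I}l_i=\sum_{j\in J}l_j$ implies $I=J$; reduced if $\gcd(l_1,\dots,l_k)=1$. The generalized tonnetz $Tonn^{n,k}(L)$ is the simplicial complex on vertex set $\mathbb{Z}_n$ whose maximal simplices are $\Delta(x;\sigma)=\{x,\,x+l_{\sigma(1)},\dots,x+l_{\sigma(1)}+\dots+l_{\sigma(k-1)}\}$ for $x\in\mathbb{Z}_n$, $\sigma\in S_k$. A step of type $i$ from a vertex $y$ is the oriented 1-simplex from $y$ to $y+l_i$. *)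

theory Defs
  imports "HOL-Combinatorics.Permutations" "HOL-Library.Function_Algebras"
begin

text \<open>The vector L = (l_1,...,l_k) is a list of naturals; indices are 0..<k (k = length L).
  Vertices of the tonnetz are the residues 0..<n, n = sum_list L, representing Z_n.\<close>

definition generic :: "nat list \<Rightarrow> bool" where
  "generic L \<longleftrightarrow> (\<forall>I J. I \<subseteq> {..<length L} \<longrightarrow> J \<subseteq> {..<length L} \<longrightarrow>
      (\<Sum>i\<in>I. L ! i) = (\<Sum>j\<in>J. L ! j) \<longrightarrow> I = J)"

definition reduced :: "nat list \<Rightarrow> bool" where
  "reduced L \<longleftrightarrow> Gcd (set L) = 1"

definition max_simplex :: "nat list \<Rightarrow> nat \<Rightarrow> (nat \<Rightarrow> nat) \<Rightarrow> nat set" where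
  "max_simplex L x \<sigma> =
     {(x + (\<Sum>j<m. L ! (\<sigma> j))) mod sum_list L | m. m < length L}"

definition tonnetz :: "nat list \<Rightarrow> nat set set" where
  "tonnetz L = {S. S \<noteq> {} \<and> (\<exists>x < sum_list L. \<exists>\<sigma>. \<sigma> permutes {..<length L} \<and>
                                    S \<subseteq> max_simplex L x \<sigma>)}"

text \<open>Integer simplicial 1-chains, represented as antisymmetric functions on ordered vertex pairs;
  the elementary chain of the oriented 1-simplex from a to b.\<close>
definition edge :: "nat \<Rightarrow> nat \<Rightarrow> (nat \<Rightarrow> nat \<Rightarrow> int)" where
  "edge a b = (\<lambda>x y. (if x = a \<and> y = b then 1 else 0) - (if x = b \<and> y = a then 1 else 0))"

definition bd2 :: "nat \<Rightarrow> nat \<Rightarrow> nat \<Rightarrow> (nat \<Rightarrow> nat \<Rightarrow> int)" where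
  "bd2 a b c = edge b c - edge a c + edge a b"

definition homologous :: "nat list \<Rightarrow> (nat \<Rightarrow> nat \<Rightarrow> int) \<Rightarrow> (nat \<Rightarrow> nat \<Rightarrow> int) \<Rightarrow> bool" where
  "homologous L c1 c2 \<longleftrightarrow>
     (\<exists>ts :: (int \<times> nat \<times> nat \<times> nat) list.
        (\<forall>(c, a, b, d) \<in> set ts. {a, b, d} \<in> tonnetz L \<and> card {a, b, d} = 3) \<and>
        c1 - c2 = sum_list (map (\<lambda>(c, a, b, d). (\<lambda>x y. c * bd2 a b d x y)) ts))"

definition step_cycle :: "nat \<Rightarrow> nat \<Rightarrow> nat \<Rightarrow> nat \<Rightarrow> (nat \<Rightarrow> nat \<Rightarrow> int)" where
  "step_cycle n l q v = (\<Sum>j<q. edge ((v + j * l) mod n) ((v + (j + 1) * l) mod n))"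

end

theory Submission imports Defs begin

text \<open>For every step type \<open>j\<close>, the cycles at \<open>v\<close> and at \<open>v + l\<^sub>j\<close> are homologous: for \<open>j \<noteq> i\<close> the
  two cycles bound a ladder of \<open>2q\<close> triangles \<open>[x, x + l\<^sub>i, x + l\<^sub>i + l\<^sub>j]\<close> and
  \<open>[x, x + l\<^sub>j, x + l\<^sub>j + l\<^sub>i]\<close>, and for \<open>j = i\<close> the cycle is merely re-indexed. Hence the set of
  shifts \<open>d\<close> such that the cycles at \<open>v\<close> and \<open>v + d\<close> are homologous for all \<open>v\<close> is closed under
  addition, is determined modulo \<open>n\<close>, and contains every \<open>l\<^sub>j\<close>; so it contains
  \<open>gcd(l\<^sub>1, \<dots>, l\<^sub>k) = 1\<close> and therefore every shift.\<close>

lemma homologous_refl: "homologous L c c"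
  unfolding homologous_def by (rule exI[of _ "[]"]) simp

lemma homologous_trans:
  assumes "homologous L c1 c2" "homologous L c2 c3"
  shows "homologous L c1 c3"
proof -
  from assms obtain ts us where
    "\<forall>(c, a, b, d) \<in> set ts. {a, b, d} \<in> tonnetz L \<and> card {a, b, d} = 3"
    "c1 - c2 = sum_list (map (\<lambda>(c, a, b, d). (\<lambda>x y. c * bd2 a b d x y)) ts)"
    "\<forall>(c, a, b, d) \<in> set us. {a, b, d} \<in> tonnetz L \<and> card {a, b, d} = 3"
    "c2 - c3 = sum_list (map (\<lambda>(c, a, b, d). (\<lambda>x y. c * bd2 a b d x y)) us)"
    unfolding homologous_def by blast
  moreover have "c1 - c3 = (c1 - c2) + (c2 - c3)" by simp
  ultimately show ?thesis
    unfolding homologous_def by (intro exI[of _ "ts @ us"]) auto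
qed

lemma step_cycle_mod: "step_cycle n l q (v mod n) = step_cycle n l q v"
  unfolding step_cycle_def by (simp add: mod_add_left_eq)

lemma step_cycle_add_step:
  assumes "n dvd q * l"
  shows "step_cycle n l q (v + l) = step_cycle n l q v"
proof -
  define f where "f j = edge ((v + j * l) mod n) ((v + (j + 1) * l) mod n)" for j
  obtain c where c: "q * l = n * c" using assms by (auto simp: dvd_def)
  have "v + q * l = v + n * c" "v + (q + 1) * l = (v + l) + n * c"
    using c by (simp_all add: algebra_simps)
  then have "f q = f 0" unfolding f_def by (simp only: mod_mult_self2) simp
  have "step_cycle n l q (v + l) = (\<Sum>j<q. f (Suc j))"
    unfolding step_cycle_def f_def by (intro sum.cong) (auto simp: algebra_simps)
  also have "\<dots> = (\<Sum>j<Suc q. f j) - f 0" by (simp only: sum.lessThan_Suc_shift) simp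
  also have "\<dots> = (\<Sum>j<q. f j)" using \<open>f q = f 0\<close> by simp
  finally show ?thesis unfolding step_cycle_def f_def .
qed

text \<open>Two closed edge paths \<open>a\<close> and \<open>b\<close> of the same length, joined by the rungs \<open>[a m, b m]\<close>, differ by
  the boundary of the ladder of triangles between them; the rungs telescope away.\<close>

lemma closed_paths_diff_eq_ladder_boundary:
  fixes a b :: "nat \<Rightarrow> nat"
  assumes "a q = a 0" "b q = b 0"
  shows "(\<Sum>m<q. edge (a m) (a (Suc m))) - (\<Sum>m<q. edge (b m) (b (Suc m))) =
         (\<Sum>m<q. bd2 (a m) (a (Suc m)) (b (Suc m)) - bd2 (a m) (b m) (b (Suc m)))"
proof -
  define g where "g m = edge (a m) (b m)" for m
  have "(\<Sum>m<q. bd2 (a m) (a (Suc m)) (b (Suc m)) - bd2 (a m) (b m) (b (Suc m))) =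
        (\<Sum>m<q. edge (a m) (a (Suc m)) - edge (b m) (b (Suc m)) + (g (Suc m) - g m))"
    unfolding bd2_def g_def by (intro sum.cong) (simp_all add: algebra_simps)
  also have "\<dots> = (\<Sum>m<q. edge (a m) (a (Suc m))) - (\<Sum>m<q. edge (b m) (b (Suc m))) + (g q - g 0)"
    by (simp add: sum.distrib sum_subtractf
        sum_lessThan_telescope[of g q, symmetric, unfolded sum_subtractf])
  also have "g q - g 0 = 0" unfolding g_def using assms by simp
  finally show ?thesis by (simp only: add_0_right)
qed

lemma exists_permutes_0_1:
  assumes "p < k" "r < k" "p \<noteq> r"
  shows "\<exists>\<sigma>. \<sigma> permutes {..<k} \<and> \<sigma> 0 = p \<and> \<sigma> (Suc 0) = r"
proof -
  define \<tau> where "\<tau> = transpose 0 p"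
  define \<sigma> where "\<sigma> = \<tau> \<circ> transpose (Suc 0) (\<tau> r)"
  have \<tau>: "\<tau> permutes {..<k}" unfolding \<tau>_def using assms by (intro permutes_swap_id) auto
  have \<tau>r: "\<tau> r < k" "\<tau> r \<noteq> 0" using assms unfolding \<tau>_def by (auto simp: transpose_def)
  have "transpose (Suc 0) (\<tau> r) permutes {..<k}" using \<tau>r assms by (intro permutes_swap_id) auto
  then have "\<sigma> permutes {..<k}" unfolding \<sigma>_def using \<tau> by (rule permutes_compose)
  moreover have "\<sigma> 0 = p" using \<tau>r(2) unfolding \<sigma>_def \<tau>_def by (simp add: transpose_def)
  moreover have "\<sigma> (Suc 0) = r" unfolding \<sigma>_def \<tau>_def by (auto simp: transpose_def)
  ultimately show ?thesis by blast
qed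

lemma triangle_in_tonnetz:
  assumes "length L \<ge> 3" "p < length L" "r < length L" "p \<noteq> r" "x < sum_list L"
  shows "{x, (x + L!p) mod sum_list L, (x + L!p + L!r) mod sum_list L} \<in> tonnetz L"
proof -
  let ?n = "sum_list L"
  obtain \<sigma> where \<sigma>: "\<sigma> permutes {..<length L}" "\<sigma> 0 = p" "\<sigma> (Suc 0) = r"
    using exists_permutes_0_1 assms(2-4) by blast
  have "x = (x + (\<Sum>j<0. L ! (\<sigma> j))) mod ?n"
    "(x + L!p) mod ?n = (x + (\<Sum>j<1. L ! (\<sigma> j))) mod ?n"
    "(x + L!p + L!r) mod ?n = (x + (\<Sum>j<2. L ! (\<sigma> j))) mod ?n"
    using \<sigma> assms(5) by (simp_all add: numeral_2_eq_2 add.assoc)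
  then have "{x, (x + L!p) mod ?n, (x + L!p + L!r) mod ?n} \<subseteq> max_simplex L x \<sigma>"
    unfolding max_simplex_def using assms(1) by fastforce
  then show ?thesis unfolding tonnetz_def using assms(5) \<sigma>(1) by blast
qed

lemma nth_add_nth_less_sum_list:
  fixes L :: "nat list"
  assumes "length L \<ge> 3" "\<forall>l\<in>set L. l > 0" "p < length L" "r < length L" "p \<noteq> r"
  shows "L!p + L!r < sum_list L"
proof -
  have "\<exists>t \<in> {0, 1, 2 :: nat}. t \<noteq> p \<and> t \<noteq> r" by auto
  then obtain t where t: "t \<in> {0, 1, 2}" "t \<noteq> p" "t \<noteq> r" by blast
  then have "t < length L" using assms(1) by auto
  have "L!p + L!r + L!t = sum ((!) L) {p, r, t}" using t assms(5) by simp
  also have "\<dots> \<le> sum ((!) L) {..<length L}" using \<open>t < length L\<close> assms(3,4) by (intro sum_mono2) auto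
  also have "\<dots> = sum_list L" by (simp add: sum_list_sum_nth atLeast0LessThan)
  finally show ?thesis using assms(2) \<open>t < length L\<close> nth_mem by fastforce
qed

lemma add_mod_neq:
  fixes a d n :: nat
  assumes "0 < d" "d < n"
  shows "(a + d) mod n \<noteq> a mod n"
  using assms by (metis mod_add_self2 mod_eq_dvd_iff_nat le_add1 add_diff_cancel_left'
      dvd_imp_le not_le)

lemma card_triangle:
  fixes L :: "nat list"
  assumes "length L \<ge> 3" "\<forall>l\<in>set L. l > 0" "p < length L" "r < length L" "p \<noteq> r"
    "x < sum_list L"
  shows "card {x, (x + L!p) mod sum_list L, (x + L!p + L!r) mod sum_list L} = 3"
proof -
  let ?n = "sum_list L"
  have lt: "L!p + L!r < ?n" using nth_add_nth_less_sum_list assms(1-5) .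
  have "L!p > 0" "L!r > 0" using assms(2-4) nth_mem by blast+
  then have "(x + L!p) mod ?n \<noteq> x mod ?n" "(x + (L!p + L!r)) mod ?n \<noteq> x mod ?n"
    "((x + L!p) + L!r) mod ?n \<noteq> (x + L!p) mod ?n"
    using lt by (intro add_mod_neq; simp)+
  then show ?thesis using assms(6) by (simp add: add.assoc)
qed

lemma step_cycle_homologous_add_other_step:
  assumes "length L \<ge> 3" "\<forall>l\<in>set L. l > 0" "i < length L" "j < length L" "i \<noteq> j"
    and "sum_list L dvd q * L!i"
  shows "homologous L (step_cycle (sum_list L) (L!i) q v)
                      (step_cycle (sum_list L) (L!i) q (v + L!j))"
proof -
  let ?n = "sum_list L"
  have "?n > 0" using assms(2-3) by (metis elem_le_sum_list gr0I le_zero_eq nth_mem)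
  define a where "a m = (v + m * L!i) mod ?n" for m
  define b where "b m = (v + L!j + m * L!i) mod ?n" for m
  define ts where "ts = concat (map (\<lambda>m. [(1::int, a m, a (Suc m), b (Suc m)),
                                           (-1, a m, b m, b (Suc m))]) [0..<q])"
  have a_lt: "a m < ?n" for m unfolding a_def using \<open>?n > 0\<close> by simp
  have a_add: "(a m + t) mod ?n = (v + m * L!i + t) mod ?n" for m t
    unfolding a_def by (rule mod_add_left_eq)
  have a_Suc: "a (Suc m) = (a m + L!i) mod ?n" for m
    unfolding a_add unfolding a_def by (simp add: algebra_simps)
  have b: "b m = (a m + L!j) mod ?n" for m
    unfolding a_add unfolding b_def by (simp add: algebra_simps)
  have b_Suc: "b (Suc m) = (a m + L!i + L!j) mod ?n" and b_Suc': "b (Suc m) = (a m + L!j + L!i) mod ?n"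
    for m unfolding add.assoc[of "a m"] a_add unfolding b_def by (simp_all add: algebra_simps)
  have "{a m, a (Suc m), b (Suc m)} \<in> tonnetz L \<and> card {a m, a (Suc m), b (Suc m)} = 3" for m
    unfolding b_Suc a_Suc
    using triangle_in_tonnetz[OF assms(1,3-5) a_lt] card_triangle[OF assms(1-5) a_lt] by simp
  moreover have "{a m, b m, b (Suc m)} \<in> tonnetz L \<and> card {a m, b m, b (Suc m)} = 3" for m
    unfolding b_Suc' unfolding b using assms(5)
    using triangle_in_tonnetz[OF assms(1,4,3) _ a_lt] card_triangle[OF assms(1,2,4,3) _ a_lt] by simp
  ultimately have triangles: "\<forall>(c, x, y, z) \<in> set ts. {x, y, z} \<in> tonnetz L \<and> card {x, y, z} = 3"
    unfolding ts_def by auto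
  obtain c where "q * L!i = ?n * c" using assms(6) by (auto simp: dvd_def)
  then have "a q = a 0" "b q = b 0" unfolding a_def b_def by simp_all
  moreover have "step_cycle ?n (L!i) q v = (\<Sum>m<q. edge (a m) (a (Suc m)))"
    "step_cycle ?n (L!i) q (v + L!j) = (\<Sum>m<q. edge (b m) (b (Suc m)))"
    unfolding step_cycle_def a_def b_def by simp_all
  ultimately have "step_cycle ?n (L!i) q v - step_cycle ?n (L!i) q (v + L!j) =
      (\<Sum>m<q. bd2 (a m) (a (Suc m)) (b (Suc m)) - bd2 (a m) (b m) (b (Suc m)))"
    using closed_paths_diff_eq_ladder_boundary by presburger
  also have "\<dots> = sum_list (map (\<lambda>(c, a, b, d). (\<lambda>x y. c * bd2 a b d x y)) ts)"
    unfolding ts_def by (induction q) (simp_all add: fun_eq_iff)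
  finally show ?thesis unfolding homologous_def using triangles by blast
qed

text \<open>For \<open>k = 2\<close> the maximal simplices are edges, so there is no ladder; but then
  \<open>l\<^sub>i + l\<^sub>j = n\<close> and the cycle at \<open>v + l\<^sub>j\<close> is the cycle at \<open>v\<close> itself.\<close>

lemma step_cycle_homologous_add_nth:
  assumes "length L \<ge> 2" "\<forall>l\<in>set L. l > 0" "i < length L" "j < length L"
    and "sum_list L dvd q * L!i"
  shows "homologous L (step_cycle (sum_list L) (L!i) q v)
                      (step_cycle (sum_list L) (L!i) q (v + L!j))"
proof -
  consider "j = i" | "i \<noteq> j" "length L \<ge> 3" | "i \<noteq> j" "length L = 2"
    using assms(1) by linarith
  then show ?thesis
  proof cases
    case 1
    then show ?thesis using step_cycle_add_step[OF assms(5)] by (simp add: homologous_refl)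
  next
    case 2
    then show ?thesis using step_cycle_homologous_add_other_step assms(2-5) by blast
  next
    case 3
    then obtain x y where "L = [x, y]" by (auto simp: numeral_2_eq_2 length_Suc_conv)
    moreover have "i < 2" "j < 2" using 3 assms(3,4) by simp_all
    ultimately have "v + L!j + L!i = v + sum_list L" using \<open>i \<noteq> j\<close> by (auto simp: less_2_cases_iff)
    have "step_cycle (sum_list L) (L!i) q (v + L!j) = step_cycle (sum_list L) (L!i) q (v + L!j + L!i)"
      using step_cycle_add_step[OF assms(5)] by simp
    also have "\<dots> = step_cycle (sum_list L) (L!i) q v"
      unfolding \<open>v + L!j + L!i = v + sum_list L\<close> by (metis mod_add_self2 step_cycle_mod)
    finally have "step_cycle (sum_list L) (L!i) q (v + L!j) = step_cycle (sum_list L) (L!i) q v" .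
    then show ?thesis by (simp add: homologous_refl)
  qed
qed

text \<open>Preimages in \<open>\<nat>\<close> of submonoids (hence subgroups) of \<open>\<int>\<^sub>n\<close>.\<close>

locale mod_closed_submonoid =
  fixes n :: nat and S :: "nat set"
  assumes modulus_pos: "0 < n"
    and zero_mem: "0 \<in> S"
    and add_mem: "a \<in> S \<Longrightarrow> b \<in> S \<Longrightarrow> a + b \<in> S"
    and mod_mem: "a \<in> S \<Longrightarrow> a mod n = b mod n \<Longrightarrow> b \<in> S"
begin

lemma mult_mem: "a \<in> S \<Longrightarrow> m * a \<in> S"
  by (induction m) (simp_all add: zero_mem add_mem)

lemma gcd_mem:
  assumes "a \<in> S" "b \<in> S"
  shows "gcd a b \<in> S"
proof (cases "a = 0")
  case True
  then show ?thesis using assms by simp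
next
  case False
  then obtain x y where xy: "a * x = b * y + gcd a b" using bezout_nat by blast
  \<comment> \<open>\<open>b * y * (n - 1)\<close> plays the role of \<open>- b * y\<close> modulo \<open>n\<close>\<close>
  have "x * a + (y * (n - 1)) * b = gcd a b + (b * y) * n"
    using xy modulus_pos by (cases n) (simp_all add: algebra_simps)
  then have "(x * a + (y * (n - 1)) * b) mod n = gcd a b mod n" by simp
  moreover have "x * a + (y * (n - 1)) * b \<in> S" using assms by (intro add_mem mult_mem)
  ultimately show ?thesis using mod_mem by blast
qed

lemma Gcd_mem: "finite A \<Longrightarrow> A \<subseteq> S \<Longrightarrow> Gcd A \<in> S"
  by (induction A rule: finite_induct) (simp_all add: zero_mem gcd_mem)

end

lemma step_cycle_homologous_add:
  assumes "length L \<ge> 2" "\<forall>l\<in>set L. l > 0" "reduced L" "i < length L"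
    and "sum_list L dvd q * L!i"
  shows "homologous L (step_cycle (sum_list L) (L!i) q v)
                      (step_cycle (sum_list L) (L!i) q (v + d))"
proof -
  let ?C = "step_cycle (sum_list L) (L!i) q"
  define S where "S = {d. \<forall>v. homologous L (?C v) (?C (v + d))}"
  have "sum_list L > 0" using assms(2,4) by (metis elem_le_sum_list gr0I le_zero_eq nth_mem)
  have "mod_closed_submonoid (sum_list L) S"
  proof
    show "0 \<in> S" unfolding S_def by (simp add: homologous_refl)
  next
    fix a b assume "a \<in> S" "b \<in> S"
    then have "homologous L (?C v) (?C (v + a))" "homologous L (?C (v + a)) (?C (v + a + b))" for v
      unfolding S_def by blast+
    then show "a + b \<in> S" unfolding S_def by (auto simp: add.assoc intro: homologous_trans)
  next
    fix a b assume "a \<in> S" "a mod sum_list L = b mod sum_list L"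
    then have "(v + a) mod sum_list L = (v + b) mod sum_list L" for v by (metis mod_add_right_eq)
    then have "?C (v + a) = ?C (v + b)" for v by (metis step_cycle_mod)
    then show "b \<in> S" using \<open>a \<in> S\<close> unfolding S_def by simp
  qed (fact \<open>sum_list L > 0\<close>)
  then interpret mod_closed_submonoid "sum_list L" S .
  have "set L \<subseteq> S"
  proof
    fix l assume "l \<in> set L"
    then obtain j where "j < length L" "l = L!j" by (metis in_set_conv_nth)
    then show "l \<in> S"
      unfolding S_def using step_cycle_homologous_add_nth[OF assms(1,2,4) _ assms(5)] by blast
  qed
  then have "Gcd (set L) \<in> S" by (intro Gcd_mem) simp_all
  then have "d * 1 \<in> S" using assms(3) unfolding reduced_def by (intro mult_mem) simp
  then show ?thesis unfolding S_def by simp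
qed

theorem proposition4p3:
  fixes L :: "nat list" and i :: nat
  assumes "length L \<ge> 2"
    and "\<forall>l \<in> set L. l > 0"
    and "generic L"
    and "reduced L"
    and "i < length L"
  shows "\<forall>v < sum_list L. \<forall>w < sum_list L.
           homologous L
             (step_cycle (sum_list L) (L ! i) (sum_list L div gcd (sum_list L) (L ! i)) v)
             (step_cycle (sum_list L) (L ! i) (sum_list L div gcd (sum_list L) (L ! i)) w)"
proof (intro allI impI)
  fix v w
  assume "v < sum_list L" "w < sum_list L"
  let ?n = "sum_list L"
  let ?q = "?n div gcd ?n (L!i)"
  have "?q * L!i = ?n * (L!i div gcd ?n (L!i))"
    by (simp add: div_mult_swap dvd_div_mult)
  then have "?n dvd ?q * L!i" by simp
  then have "homologous L (step_cycle ?n (L!i) ?q v) (step_cycle ?n (L!i) ?q (v + (?n - v + w)))"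
    using step_cycle_homologous_add assms(1,2,4,5) by blast
  moreover have "(v + (?n - v + w)) mod ?n = w mod ?n" using \<open>v < ?n\<close> by simp
  ultimately show "homologous L (step_cycle ?n (L!i) ?q v) (step_cycle ?n (L!i) ?q w)"
    by (metis step_cycle_mod)
qed

end
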